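(* Let $\mathcal{D}[t]\subset\mathcal{H}\subset\mathcal{D}^\times[t^\times]$ be a rigged Hilbert space with $\mathcal{D}[t]$ complete and reflexive. A sequence $\{\zeta_n\}$ of elements of $\mathcal{D}^\times$ is Bessel-like if and only if $\sum_{k=1}^\infty|\langle\zeta_k,\eta\rangle|^2<\infty$ for every $\eta\in\mathcal{D}$ and the analysis operator $$F:\eta\in\mathcal{D}[t]\mapsto\{\overline{\langle\zeta_k,\eta\rangle}\}\in\ell^2[\|\cdot\|_2]$$ is continuous.
   Context: A rigged Hilbert space $\mathcal{D}[t]\subset\mathcal{H}\subset\mathcal{D}^\times[t^\times]$: $\mathcal{D}$ is a dense subspace of the Hilbert space $\mathcal{H}$ with a locally convex topology $t$ finer than the norm topology, $\mathcal{D}^\times$ is the space of continuous conjugate-linear functionals on $\mathcal{D}[t]$ with the strong dual topology $t^\times=\beta(\mathcal{D}^\times,\mathcal{D})$, $\mathcal{H}\subset\mathcal{D}^\times$, and the duality form $\langle\Phi,\eta\rangle$ (value of $\Phi\in\mathcal{D}^\times$ at $\eta\in\mathcal{D}$) extends the inner product. A sequence $\{\zeta_n\}\subset\mathcal{D}^\times$ is Bessel-like if for every bounded subset $\mathcal{M}$ of $\mathcal{D}[t]$, $\sup_{\eta\in\mathcal{M}}\sum_{k=1}^\infty|\langle\zeta_k,\eta\rangle|^2<\infty$. *)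

theory Defs
  imports "HOL-Analysis.Analysis" "HOL-Library.Function_Algebras"
begin

text \<open>A locally convex topology on a (sub)space X is described by a family Q of
  seminorms; the basic neighbourhoods of x are {y in X. p (y - x) < delta for p in S}
  with S a finite subfamily of Q.\<close>

definition seminorm_on :: "'b::ab_group_add set \<Rightarrow> (complex \<Rightarrow> 'b \<Rightarrow> 'b) \<Rightarrow> ('b \<Rightarrow> real) \<Rightarrow> bool" where
  "seminorm_on X sc p \<longleftrightarrow>
     (\<forall>x\<in>X. 0 \<le> p x) \<and>
     (\<forall>x\<in>X. \<forall>c. p (sc c x) = cmod c * p x) \<and>
     (\<forall>x\<in>X. \<forall>y\<in>X. p (x + y) \<le> p x + p y)"

definition lcs_open :: "'b::ab_group_add set \<Rightarrow> ('b \<Rightarrow> real) set \<Rightarrow> 'b set \<Rightarrow> bool" where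
  "lcs_open X Q U \<longleftrightarrow> U \<subseteq> X \<and>
     (\<forall>x\<in>U. \<exists>S \<delta>. finite S \<and> S \<subseteq> Q \<and> 0 < \<delta> \<and> {y\<in>X. \<forall>p\<in>S. p (y - x) < \<delta>} \<subseteq> U)"

definition lcs_bounded :: "'b::ab_group_add set \<Rightarrow> ('b \<Rightarrow> real) set \<Rightarrow> 'b set \<Rightarrow> bool" where
  "lcs_bounded X Q M \<longleftrightarrow> M \<subseteq> X \<and> (\<forall>p\<in>Q. bdd_above (p ` M))"

definition lcs_continuous_into ::
  "'b::ab_group_add set \<Rightarrow> ('b \<Rightarrow> real) set \<Rightarrow> ('c \<Rightarrow> 'c \<Rightarrow> real) \<Rightarrow> ('b \<Rightarrow> 'c) \<Rightarrow> bool" where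
  "lcs_continuous_into X Q d g \<longleftrightarrow>
     (\<forall>x\<in>X. \<forall>\<epsilon>>0. \<exists>S \<delta>. finite S \<and> S \<subseteq> Q \<and> 0 < \<delta> \<and>
        (\<forall>y\<in>X. (\<forall>p\<in>S. p (y - x) < \<delta>) \<longrightarrow> d (g y) (g x) < \<epsilon>))"

definition lcs_complete :: "'b::ab_group_add set \<Rightarrow> ('b \<Rightarrow> real) set \<Rightarrow> bool" where
  "lcs_complete X Q \<longleftrightarrow>
     (\<forall>F. F \<noteq> bot \<and> eventually (\<lambda>x. x \<in> X) F \<and>
          (\<forall>p\<in>Q. \<forall>e>0. \<exists>A. eventually (\<lambda>x. x \<in> A) F \<and> (\<forall>x\<in>A. \<forall>y\<in>A. p (x - y) < e))
        \<longrightarrow> (\<exists>x\<in>X. \<forall>p\<in>Q. \<forall>e>0. eventually (\<lambda>y. p (y - x) < e) F))"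

definition sup_over :: "'b set \<Rightarrow> ('b \<Rightarrow> real) \<Rightarrow> real" where
  "sup_over M g = Sup (insert 0 (g ` M))"

definition conj_linear_on :: "(complex \<Rightarrow> 'a \<Rightarrow> 'a) \<Rightarrow> 'a::ab_group_add set \<Rightarrow> ('a \<Rightarrow> complex) \<Rightarrow> bool" where
  "conj_linear_on sc D f \<longleftrightarrow>
     (\<forall>x\<in>D. \<forall>y\<in>D. f (x + y) = f x + f y) \<and> (\<forall>x\<in>D. \<forall>c. f (sc c x) = cnj c * f x)"

text \<open>The space D^x of continuous conjugate-linear functionals on D[t]
  (represented as functions vanishing outside D).\<close>
definition lcs_dual :: "(complex \<Rightarrow> 'a \<Rightarrow> 'a) \<Rightarrow> 'a::ab_group_add set \<Rightarrow> ('a \<Rightarrow> real) set \<Rightarrow> ('a \<Rightarrow> complex) set" where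
  "lcs_dual sc D P = {f. conj_linear_on sc D f \<and> lcs_continuous_into D P dist f \<and> (\<forall>x. x \<notin> D \<longrightarrow> f x = 0)}"

text \<open>Seminorms of the strong dual topology beta(D^x, D): sup over bounded subsets of D.\<close>
definition strong_seminorms :: "'a::ab_group_add set \<Rightarrow> ('a \<Rightarrow> real) set \<Rightarrow> (('a \<Rightarrow> complex) \<Rightarrow> real) set" where
  "strong_seminorms D P = {(\<lambda>f. sup_over M (\<lambda>x. cmod (f x))) | M. lcs_bounded D P M}"

definition lcs_bidual :: "(complex \<Rightarrow> 'a \<Rightarrow> 'a) \<Rightarrow> 'a::ab_group_add set \<Rightarrow> ('a \<Rightarrow> real) set \<Rightarrow> (('a \<Rightarrow> complex) \<Rightarrow> complex) set" where
  "lcs_bidual sc D P = {\<Phi>.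
     (\<forall>f\<in>lcs_dual sc D P. \<forall>g\<in>lcs_dual sc D P. \<Phi> (f + g) = \<Phi> f + \<Phi> g) \<and>
     (\<forall>f\<in>lcs_dual sc D P. \<forall>c. \<Phi> (\<lambda>x. c * f x) = cnj c * \<Phi> f) \<and>
     lcs_continuous_into (lcs_dual sc D P) (strong_seminorms D P) dist \<Phi>}"

text \<open>Seminorms on D of the topology induced by the canonical embedding into the
  strong bidual beta(D^xx, D^x): sup over strongly bounded subsets of D^x.\<close>
definition bidual_seminorms :: "(complex \<Rightarrow> 'a \<Rightarrow> 'a) \<Rightarrow> 'a::ab_group_add set \<Rightarrow> ('a \<Rightarrow> real) set \<Rightarrow> ('a \<Rightarrow> real) set" where
  "bidual_seminorms sc D P = {(\<lambda>x. sup_over B (\<lambda>f. cmod (f x))) | B.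
      lcs_bounded (lcs_dual sc D P) (strong_seminorms D P) B}"

text \<open>Reflexive: the canonical embedding eta |-> (Phi |-> conj <Phi, eta>) of D into D^xx
  is onto and is a homeomorphism of D[t] onto D^xx with the strong topology.\<close>
definition lcs_reflexive :: "(complex \<Rightarrow> 'a \<Rightarrow> 'a) \<Rightarrow> 'a::ab_group_add set \<Rightarrow> ('a \<Rightarrow> real) set \<Rightarrow> bool" where
  "lcs_reflexive sc D P \<longleftrightarrow>
     (\<forall>\<Phi>\<in>lcs_bidual sc D P. \<exists>x\<in>D. \<forall>f\<in>lcs_dual sc D P. \<Phi> f = cnj (f x)) \<and>
     (\<forall>U. lcs_open D P U \<longleftrightarrow> lcs_open D (bidual_seminorms sc D P) U)"

definition hnorm :: "('a \<Rightarrow> 'a \<Rightarrow> complex) \<Rightarrow> 'a \<Rightarrow> real" where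
  "hnorm ip x = sqrt (Re (ip x x))"

text \<open>The Hilbert space H is the whole type 'a, a complex vector space with scalar
  multiplication sc and inner product ip (linear in the first, conjugate-linear in the
  second argument), complete for the induced norm.
  The embedding H into D^x is h |-> (eta |-> ip h eta), which is automatically
  continuous and injective under these assumptions.\<close>
definition rigged_hilbert_space ::
  "(complex \<Rightarrow> 'a::ab_group_add \<Rightarrow> 'a) \<Rightarrow> ('a \<Rightarrow> 'a \<Rightarrow> complex) \<Rightarrow> 'a set \<Rightarrow> ('a \<Rightarrow> real) set \<Rightarrow> bool" where
  "rigged_hilbert_space sc ip D P \<longleftrightarrow>
     vector_space sc \<and>
     (\<forall>x y z. ip (x + y) z = ip x z + ip y z) \<and>
     (\<forall>c x y. ip (sc c x) y = c * ip x y) \<and>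
     (\<forall>x y. ip y x = cnj (ip x y)) \<and>
     (\<forall>x. 0 \<le> Re (ip x x)) \<and>
     (\<forall>x. ip x x = 0 \<longrightarrow> x = 0) \<and>
     (\<forall>X::nat \<Rightarrow> 'a. (\<forall>e>0. \<exists>N. \<forall>m\<ge>N. \<forall>n\<ge>N. hnorm ip (X m - X n) < e) \<longrightarrow>
         (\<exists>l. (\<lambda>n. hnorm ip (X n - l)) \<longlonglongrightarrow> 0)) \<and>
     module.subspace sc D \<and>
     (\<forall>h. \<forall>e>0. \<exists>x\<in>D. hnorm ip (h - x) < e) \<and>
     (\<forall>p\<in>P. seminorm_on D sc p) \<and>
     lcs_continuous_into D P (\<lambda>a b. hnorm ip (a - b)) id"

definition bessel_like :: "'a::ab_group_add set \<Rightarrow> ('a \<Rightarrow> real) set \<Rightarrow> (nat \<Rightarrow> 'a \<Rightarrow> complex) \<Rightarrow> bool" where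
  "bessel_like D P \<zeta> \<longleftrightarrow>
     (\<forall>M. lcs_bounded D P M \<longrightarrow>
        (\<exists>B. \<forall>\<eta>\<in>M. summable (\<lambda>k. (cmod (\<zeta> k \<eta>))\<^sup>2) \<and> (\<Sum>k. (cmod (\<zeta> k \<eta>))\<^sup>2) \<le> B))"

definition l2_dist :: "(nat \<Rightarrow> complex) \<Rightarrow> (nat \<Rightarrow> complex) \<Rightarrow> real" where
  "l2_dist a b = sqrt (\<Sum>k. (cmod (a k - b k))\<^sup>2)"

end

theory Submission
  imports Defs
begin

text \<open>By l2 duality, ||F eta||_2 is the supremum of
  |sum_k a_k zeta_k(eta)| over finite coefficient families with sum_k |a_k|^2 <= 1. If the
  sequence is Bessel-like, these finite combinations form a strongly bounded subset of the
  dual, so eta |-> ||F eta||_2 is one of the seminorms of the bidual topology on D;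
  reflexivity identifies that topology with t, which makes F continuous. Conversely,
  continuity of F at 0 bounds ||F eta||_2 on a basic t-neighbourhood of 0, and positive
  homogeneity carries the bound over to every t-bounded set.\<close>

lemma norm_sum_mult_le_l2_norm:
  fixes a w :: "nat \<Rightarrow> complex"
  assumes "summable (\<lambda>k. (cmod (w k))\<^sup>2)" and "(\<Sum>k<n. (cmod (a k))\<^sup>2) \<le> 1"
  shows "cmod (\<Sum>k<n. a k * w k) \<le> sqrt (\<Sum>k. (cmod (w k))\<^sup>2)"
proof -
  have "cmod (\<Sum>k<n. a k * w k) \<le> (\<Sum>k<n. \<bar>cmod (a k)\<bar> * \<bar>cmod (w k)\<bar>)"
    by (rule order_trans[OF norm_sum]) (simp add: norm_mult)
  also have "\<dots> \<le> L2_set (\<lambda>k. cmod (a k)) {..<n} * L2_set (\<lambda>k. cmod (w k)) {..<n}"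
    by (rule L2_set_mult_ineq)
  also have "\<dots> \<le> 1 * L2_set (\<lambda>k. cmod (w k)) {..<n}"
    using assms(2) by (intro mult_right_mono) (auto simp: L2_set_def L2_set_nonneg sum_nonneg)
  also have "\<dots> \<le> sqrt (\<Sum>k. (cmod (w k))\<^sup>2)"
    unfolding L2_set_def using assms(1) by (auto intro!: sum_le_suminf)
  finally show ?thesis .
qed

lemma l2_norm_le_if_dual_bound:
  fixes w :: "nat \<Rightarrow> complex"
  assumes bound: "\<And>n a. (\<Sum>k<n. (cmod (a k))\<^sup>2) \<le> 1 \<Longrightarrow> cmod (\<Sum>k<n. a k * w k) \<le> c"
  shows "summable (\<lambda>k. (cmod (w k))\<^sup>2)" and "sqrt (\<Sum>k. (cmod (w k))\<^sup>2) \<le> c"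
proof -
  have c: "0 \<le> c" using bound[of 0] by simp
  have partial: "(\<Sum>k<n. (cmod (w k))\<^sup>2) \<le> c\<^sup>2" for n
  proof -
    define s where "s = sqrt (\<Sum>k<n. (cmod (w k))\<^sup>2)"
    have s2: "s\<^sup>2 = (\<Sum>k<n. (cmod (w k))\<^sup>2)" unfolding s_def by (simp add: sum_nonneg)
    have "s \<le> c"
    proof (cases "s = 0")
      case False
      define a where "a k = cnj (w k) / of_real s" for k
      have "(\<Sum>k<n. (cmod (a k))\<^sup>2) = (\<Sum>k<n. (cmod (w k))\<^sup>2) / s\<^sup>2"
        unfolding a_def by (simp add: norm_divide power_divide sum_divide_distrib)
      then have "cmod (\<Sum>k<n. a k * w k) \<le> c" using False by (intro bound) (simp add: s2)
      moreover have "(\<Sum>k<n. a k * w k) = of_real s"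
      proof -
        have "(\<Sum>k<n. a k * w k) = of_real (s\<^sup>2 / s)"
          unfolding a_def s2 by (simp add: mult.commute sum_divide_distrib flip: complex_norm_square)
        also have "s\<^sup>2 / s = s" using False by (simp add: power2_eq_square)
        finally show ?thesis .
      qed
      ultimately show ?thesis by (simp add: s_def)
    qed (use c in simp)
    then show ?thesis unfolding s2[symmetric] by (intro power_mono) (simp_all add: s_def sum_nonneg)
  qed
  then show summable: "summable (\<lambda>k. (cmod (w k))\<^sup>2)" by (intro summableI_nonneg_bounded) auto
  have "(\<Sum>k. (cmod (w k))\<^sup>2) \<le> c\<^sup>2" by (rule suminf_le_const[OF summable partial])
  then show "sqrt (\<Sum>k. (cmod (w k))\<^sup>2) \<le> c" using c real_le_lsqrt by (simp add: real_sqrt_le_iff)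
qed

lemma l2_norm_triangle:
  fixes v w :: "nat \<Rightarrow> complex"
  assumes "summable (\<lambda>k. (cmod (v k))\<^sup>2)" and "summable (\<lambda>k. (cmod (w k))\<^sup>2)"
  shows "sqrt (\<Sum>k. (cmod (v k + w k))\<^sup>2)
           \<le> sqrt (\<Sum>k. (cmod (v k))\<^sup>2) + sqrt (\<Sum>k. (cmod (w k))\<^sup>2)"
proof (rule l2_norm_le_if_dual_bound(2))
  fix n and a :: "nat \<Rightarrow> complex"
  assume a: "(\<Sum>k<n. (cmod (a k))\<^sup>2) \<le> 1"
  have "cmod (\<Sum>k<n. a k * (v k + w k)) \<le> cmod (\<Sum>k<n. a k * v k) + cmod (\<Sum>k<n. a k * w k)"
    by (simp add: distrib_left sum.distrib norm_triangle_ineq)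
  also have "\<dots> \<le> sqrt (\<Sum>k. (cmod (v k))\<^sup>2) + sqrt (\<Sum>k. (cmod (w k))\<^sup>2)"
    using a assms by (intro add_mono norm_sum_mult_le_l2_norm)
  finally show "cmod (\<Sum>k<n. a k * (v k + w k))
      \<le> sqrt (\<Sum>k. (cmod (v k))\<^sup>2) + sqrt (\<Sum>k. (cmod (w k))\<^sup>2)" .
qed

lemma lcs_continuous_into_add:
  assumes "lcs_continuous_into X Q dist f" and "lcs_continuous_into X Q dist g"
  shows "lcs_continuous_into X Q dist (\<lambda>x. f x + g x :: 'c::real_normed_vector)"
  unfolding lcs_continuous_into_def
proof (intro ballI allI impI)
  fix x and e :: real assume x: "x \<in> X" and e: "0 < e"
  obtain S1 d1 where S1: "finite S1" "S1 \<subseteq> Q" "0 < d1"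
      "\<forall>y\<in>X. (\<forall>p\<in>S1. p (y - x) < d1) \<longrightarrow> dist (f y) (f x) < e/2"
    using assms(1)[unfolded lcs_continuous_into_def, rule_format, OF x half_gt_zero[OF e]] by blast
  obtain S2 d2 where S2: "finite S2" "S2 \<subseteq> Q" "0 < d2"
      "\<forall>y\<in>X. (\<forall>p\<in>S2. p (y - x) < d2) \<longrightarrow> dist (g y) (g x) < e/2"
    using assms(2)[unfolded lcs_continuous_into_def, rule_format, OF x half_gt_zero[OF e]] by blast
  show "\<exists>S \<delta>. finite S \<and> S \<subseteq> Q \<and> 0 < \<delta> \<and>
      (\<forall>y\<in>X. (\<forall>p\<in>S. p (y - x) < \<delta>) \<longrightarrow> dist (f y + g y) (f x + g x) < e)"
  proof (intro exI conjI ballI impI)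
    show "finite (S1 \<union> S2)" "S1 \<union> S2 \<subseteq> Q" "0 < min d1 d2" using S1 S2 by auto
    fix y assume "y \<in> X" "\<forall>p\<in>S1 \<union> S2. p (y - x) < min d1 d2"
    then have "dist (f y) (f x) < e/2" "dist (g y) (g x) < e/2" using S1(4) S2(4) by auto
    moreover have "dist (f y + g y) (f x + g x) \<le> dist (f y) (f x) + dist (g y) (g x)"
      by (rule dist_triangle_add)
    ultimately show "dist (f y + g y) (f x + g x) < e" by linarith
  qed
qed

lemma lcs_continuous_into_mult_left:
  assumes "lcs_continuous_into X Q dist f"
  shows "lcs_continuous_into X Q dist (\<lambda>x. c * f x :: 'c::real_normed_field)"
  unfolding lcs_continuous_into_def
proof (intro ballI allI impI)
  fix x and e :: real assume x: "x \<in> X" and e: "0 < e"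
  have ec: "0 < e / (norm c + 1)" using e by (simp add: add_nonneg_pos)
  obtain S d where S: "finite S" "S \<subseteq> Q" "0 < d"
      "\<forall>y\<in>X. (\<forall>p\<in>S. p (y - x) < d) \<longrightarrow> dist (f y) (f x) < e / (norm c + 1)"
    using assms[unfolded lcs_continuous_into_def, rule_format, OF x ec] by blast
  show "\<exists>S \<delta>. finite S \<and> S \<subseteq> Q \<and> 0 < \<delta> \<and>
      (\<forall>y\<in>X. (\<forall>p\<in>S. p (y - x) < \<delta>) \<longrightarrow> dist (c * f y) (c * f x) < e)"
  proof (intro exI conjI ballI impI)
    show "finite S" "S \<subseteq> Q" "0 < d" using S by auto
    fix y assume "y \<in> X" "\<forall>p\<in>S. p (y - x) < d"
    then have fy: "dist (f y) (f x) < e / (norm c + 1)" using S(4) by auto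
    have "dist (c * f y) (c * f x) = norm c * dist (f y) (f x)"
      by (simp add: dist_norm norm_mult flip: right_diff_distrib)
    also have "\<dots> \<le> (norm c + 1) * dist (f y) (f x)" by (simp add: mult_right_mono)
    also have "\<dots> < (norm c + 1) * (e / (norm c + 1))"
      using fy by (intro mult_strict_left_mono) (auto simp: add_nonneg_pos)
    also have "\<dots> = e"
    proof -
      have "norm c + 1 \<noteq> 0" using norm_ge_zero[of c] by linarith
      then show ?thesis by simp
    qed
    finally show "dist (c * f y) (c * f x) < e" .
  qed
qed

lemma lcs_continuous_into_sum:
  fixes n :: nat
  assumes "\<And>k. lcs_continuous_into X Q dist (f k)"
  shows "lcs_continuous_into X Q dist (\<lambda>x. \<Sum>k<n. a k * f k x :: 'c::real_normed_field)"
proof (induction n)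
  case 0
  show ?case unfolding lcs_continuous_into_def by (auto intro: exI[of _ "{}"] exI[of _ 1])
next
  case (Suc n)
  then show ?case by (simp add: lcs_continuous_into_add lcs_continuous_into_mult_left assms)
qed

lemma lcs_dual_sum:
  fixes n :: nat
  assumes "\<And>k. f k \<in> lcs_dual sc D P"
  shows "(\<lambda>x. \<Sum>k<n. a k * f k x) \<in> lcs_dual sc D P"
proof -
  have "f k (x + y) = f k x + f k y" "f k (sc c x) = cnj c * f k x"
    if "x \<in> D" "y \<in> D" for k x y c
    using assms[of k] that unfolding lcs_dual_def conj_linear_on_def by blast+
  then have "conj_linear_on sc D (\<lambda>x. \<Sum>k<n. a k * f k x)"
    unfolding conj_linear_on_def
    by (simp add: distrib_left sum.distrib sum_distrib_left mult.left_commute)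
  moreover have "lcs_continuous_into D P dist (\<lambda>x. \<Sum>k<n. a k * f k x)"
    by (rule lcs_continuous_into_sum) (use assms in \<open>simp add: lcs_dual_def\<close>)
  moreover have "(\<Sum>k<n. a k * f k x) = 0" if "x \<notin> D" for x
    using assms that unfolding lcs_dual_def by simp
  ultimately show ?thesis unfolding lcs_dual_def by blast
qed

lemma lcs_dual_diff:
  assumes "module sc" and "module.subspace sc D" and "f \<in> lcs_dual sc D P"
    and "x \<in> D" and "y \<in> D"
  shows "f (x - y) = f x - f y"
proof -
  have "x - y \<in> D" using assms by (simp add: module.subspace_diff)
  then have "f ((x - y) + y) = f (x - y) + f y"
    using assms(3,5) unfolding lcs_dual_def conj_linear_on_def by blast
  then show ?thesis by simp
qed

definition unit_combinations :: "(nat \<Rightarrow> 'a \<Rightarrow> complex) \<Rightarrow> ('a \<Rightarrow> complex) set" where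
  "unit_combinations \<zeta> = {(\<lambda>x. \<Sum>k<n. a k * \<zeta> k x) | n a. (\<Sum>k<n. (cmod (a k))\<^sup>2) \<le> 1}"

definition analysis_norm :: "(nat \<Rightarrow> 'a \<Rightarrow> complex) \<Rightarrow> 'a \<Rightarrow> real" where
  "analysis_norm \<zeta> x = sqrt (\<Sum>k. (cmod (\<zeta> k x))\<^sup>2)"

lemma norm_unit_combination_le:
  assumes "summable (\<lambda>k. (cmod (\<zeta> k x))\<^sup>2)" and "f \<in> unit_combinations \<zeta>"
  shows "cmod (f x) \<le> analysis_norm \<zeta> x"
  using assms norm_sum_mult_le_l2_norm[of "\<lambda>k. \<zeta> k x", OF assms(1)]
  by (auto simp: unit_combinations_def analysis_norm_def)

lemma sup_over_unit_combinations:
  assumes "summable (\<lambda>k. (cmod (\<zeta> k x))\<^sup>2)"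
  shows "sup_over (unit_combinations \<zeta>) (\<lambda>f. cmod (f x)) = analysis_norm \<zeta> x"
proof (rule antisym)
  have le: "\<forall>v \<in> insert 0 ((\<lambda>f. cmod (f x)) ` unit_combinations \<zeta>). v \<le> analysis_norm \<zeta> x"
    using norm_unit_combination_le[of \<zeta> x, OF assms] suminf_nonneg[OF assms]
    by (auto simp: analysis_norm_def)
  then show "sup_over (unit_combinations \<zeta>) (\<lambda>f. cmod (f x)) \<le> analysis_norm \<zeta> x"
    unfolding sup_over_def by (intro cSup_least) auto
  show "analysis_norm \<zeta> x \<le> sup_over (unit_combinations \<zeta>) (\<lambda>f. cmod (f x))"
    unfolding analysis_norm_def
  proof (rule l2_norm_le_if_dual_bound(2))
    fix n :: nat and a :: "nat \<Rightarrow> complex"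
    assume "(\<Sum>k<n. (cmod (a k))\<^sup>2) \<le> 1"
    then have "(\<lambda>x. \<Sum>k<n. a k * \<zeta> k x) \<in> unit_combinations \<zeta>"
      unfolding unit_combinations_def by blast
    then show "cmod (\<Sum>k<n. a k * \<zeta> k x) \<le> sup_over (unit_combinations \<zeta>) (\<lambda>f. cmod (f x))"
      unfolding sup_over_def using le by (intro cSup_upper bdd_aboveI) auto
  qed
qed

lemma unit_combinations_strongly_bounded:
  assumes "\<And>k. \<zeta> k \<in> lcs_dual sc D P" and "bessel_like D P \<zeta>"
  shows "lcs_bounded (lcs_dual sc D P) (strong_seminorms D P) (unit_combinations \<zeta>)"
  unfolding lcs_bounded_def
proof (intro conjI ballI)
  show "unit_combinations \<zeta> \<subseteq> lcs_dual sc D P"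
    using lcs_dual_sum[of \<zeta>, OF assms(1)] unfolding unit_combinations_def by blast
  fix p assume "p \<in> strong_seminorms D P"
  then obtain M where p: "p = (\<lambda>f. sup_over M (\<lambda>x. cmod (f x)))" and M: "lcs_bounded D P M"
    unfolding strong_seminorms_def by blast
  obtain B where B: "\<forall>\<eta>\<in>M. summable (\<lambda>k. (cmod (\<zeta> k \<eta>))\<^sup>2) \<and> (\<Sum>k. (cmod (\<zeta> k \<eta>))\<^sup>2) \<le> B"
    using assms(2)[unfolded bessel_like_def, rule_format, OF M] by (elim exE) (rule that)
  have "p f \<le> max 0 (sqrt B)" if f: "f \<in> unit_combinations \<zeta>" for f
    unfolding p sup_over_def
  proof (rule cSup_least)
    fix v assume "v \<in> insert 0 ((\<lambda>x. cmod (f x)) ` M)"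
    moreover have "cmod (f \<eta>) \<le> sqrt B" if "\<eta> \<in> M" for \<eta>
      using norm_unit_combination_le[OF _ f] B that unfolding analysis_norm_def
      by (meson order_trans real_sqrt_le_mono)
    ultimately show "v \<le> max 0 (sqrt B)" by force
  qed simp
  then show "bdd_above (p ` unit_combinations \<zeta>)" by (intro bdd_aboveI2)
qed

lemma analysis_norm_bidual_seminorm:
  assumes "\<And>k. \<zeta> k \<in> lcs_dual sc D P" and "bessel_like D P \<zeta>"
    and "\<And>x. summable (\<lambda>k. (cmod (\<zeta> k x))\<^sup>2)"
  shows "analysis_norm \<zeta> \<in> bidual_seminorms sc D P"
proof -
  have "analysis_norm \<zeta> = (\<lambda>x. sup_over (unit_combinations \<zeta>) (\<lambda>f. cmod (f x)))"
    using sup_over_unit_combinations[of \<zeta>, OF assms(3)] by auto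
  then show ?thesis
    using unit_combinations_strongly_bounded[OF assms(1,2)] unfolding bidual_seminorms_def by blast
qed

lemma lcs_open_seminorm_ball:
  fixes q :: "'b::ab_group_add \<Rightarrow> real"
  assumes "q \<in> Q" and "x \<in> X"
    and diff: "\<And>a b. a \<in> X \<Longrightarrow> b \<in> X \<Longrightarrow> a - b \<in> X"
    and subadditive: "\<And>a b. a \<in> X \<Longrightarrow> b \<in> X \<Longrightarrow> q (a + b) \<le> q a + q b"
  shows "lcs_open X Q {y \<in> X. q (y - x) < e}"
  unfolding lcs_open_def
proof (intro conjI ballI)
  fix z assume z: "z \<in> {y \<in> X. q (y - x) < e}"
  show "\<exists>S \<delta>. finite S \<and> S \<subseteq> Q \<and> 0 < \<delta> \<and>
      {y \<in> X. \<forall>p\<in>S. p (y - z) < \<delta>} \<subseteq> {y \<in> X. q (y - x) < e}"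
  proof (intro exI conjI)
    show "finite {q}" "{q} \<subseteq> Q" "0 < e - q (z - x)" using assms(1) z by auto
    show "{y \<in> X. \<forall>p\<in>{q}. p (y - z) < e - q (z - x)} \<subseteq> {y \<in> X. q (y - x) < e}"
    proof
      fix y assume y: "y \<in> {y \<in> X. \<forall>p\<in>{q}. p (y - z) < e - q (z - x)}"
      have "q (y - x) = q ((y - z) + (z - x))" by simp
      also have "\<dots> \<le> q (y - z) + q (z - x)" using y z assms(2) by (intro subadditive diff) auto
      also have "\<dots> < e" using y by simp
      finally show "y \<in> {y \<in> X. q (y - x) < e}" using y by simp
    qed
  qed
qed auto

lemma lcs_continuous_into_if_dominated:
  assumes balls_open: "\<And>x e. x \<in> X \<Longrightarrow> 0 < e \<Longrightarrow> lcs_open X Q {y \<in> X. q (y - x) < e}"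
    and "q 0 = 0"
    and dominated: "\<And>x y. x \<in> X \<Longrightarrow> y \<in> X \<Longrightarrow> d (g y) (g x) \<le> q (y - x)"
  shows "lcs_continuous_into X Q d g"
  unfolding lcs_continuous_into_def
proof (intro ballI allI impI)
  fix x and e :: real assume x: "x \<in> X" and e: "0 < e"
  have "x \<in> {y \<in> X. q (y - x) < e}" using x e \<open>q 0 = 0\<close> by simp
  then obtain S \<delta> where S: "finite S" "S \<subseteq> Q" "0 < \<delta>"
      "{y \<in> X. \<forall>p\<in>S. p (y - x) < \<delta>} \<subseteq> {y \<in> X. q (y - x) < e}"
    using balls_open[OF x e] unfolding lcs_open_def by blast
  show "\<exists>S \<delta>. finite S \<and> S \<subseteq> Q \<and> 0 < \<delta> \<and> (\<forall>y\<in>X. (\<forall>p\<in>S. p (y - x) < \<delta>) \<longrightarrow> d (g y) (g x) < e)"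
  proof (intro exI conjI ballI impI)
    fix y assume "y \<in> X" "\<forall>p\<in>S. p (y - x) < \<delta>"
    then have "q (y - x) < e" using S(4) by blast
    then show "d (g y) (g x) < e" using dominated[OF x \<open>y \<in> X\<close>] by linarith
  qed (use S in auto)
qed

lemma bdd_above_if_homogeneous_and_bounded_near_zero:
  fixes N :: "'b::ab_group_add \<Rightarrow> real"
  assumes seminorms: "\<forall>p\<in>S. seminorm_on X sc p" and "finite S" and "0 < \<delta>"
    and near_zero: "\<And>y. y \<in> X \<Longrightarrow> \<forall>p\<in>S. p y < \<delta> \<Longrightarrow> N y < 1"
    and scale_closed: "\<And>x t. x \<in> X \<Longrightarrow> 0 < t \<Longrightarrow> sc (of_real t) x \<in> X"
    and homogeneous: "\<And>x t. x \<in> X \<Longrightarrow> 0 < t \<Longrightarrow> N (sc (of_real t) x) = t * N x"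
    and "M \<subseteq> X" and bounded: "\<forall>p\<in>S. bdd_above (p ` M)"
  shows "bdd_above (N ` M)"
proof -
  obtain B where B: "\<forall>p\<in>S. \<forall>\<eta>\<in>M. p \<eta> \<le> B p"
    using bchoice[OF bounded[unfolded bdd_above_def]] by auto
  define C where "C = 1 + (\<Sum>p\<in>S. \<bar>B p\<bar>)"
  have C: "0 < C" unfolding C_def by (simp add: add_pos_nonneg sum_nonneg)
  have bound: "p \<eta> \<le> C" if "p \<in> S" "\<eta> \<in> M" for p \<eta>
  proof -
    have "p \<eta> \<le> \<bar>B p\<bar>" using B that by fastforce
    also have "\<dots> \<le> (\<Sum>p\<in>S. \<bar>B p\<bar>)" using that \<open>finite S\<close> by (intro member_le_sum) auto
    finally show ?thesis unfolding C_def by simp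
  qed
  define t where "t = \<delta> / (2 * C)"
  have t: "0 < t" unfolding t_def using C \<open>0 < \<delta>\<close> by simp
  have "N \<eta> < 1 / t" if \<eta>: "\<eta> \<in> M" for \<eta>
  proof -
    have \<eta>X: "\<eta> \<in> X" using \<eta> \<open>M \<subseteq> X\<close> by auto
    have "p (sc (of_real t) \<eta>) < \<delta>" if p: "p \<in> S" for p
    proof -
      have "p (sc (of_real t) \<eta>) = cmod (of_real t) * p \<eta>"
        using seminorms p \<eta>X unfolding seminorm_on_def by blast
      also have "\<dots> = t * p \<eta>" using t by simp
      also have "\<dots> \<le> t * C" using bound[OF p \<eta>] t by simp
      also have "\<dots> < \<delta>" unfolding t_def using C \<open>0 < \<delta>\<close> by simp
      finally show ?thesis .
    qed
    then have "t * N \<eta> < 1"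
      using near_zero[OF scale_closed[OF \<eta>X t]] homogeneous[OF \<eta>X t] by simp
    then show ?thesis using t by (simp add: field_simps)
  qed
  then show ?thesis by (intro bdd_aboveI2) (rule less_imp_le)
qed

lemma bessel_like_summable:
  assumes "bessel_like D P \<zeta>" and "\<eta> \<in> D"
  shows "summable (\<lambda>k. (cmod (\<zeta> k \<eta>))\<^sup>2)"
proof -
  have "lcs_bounded D P {\<eta>}" using assms(2) unfolding lcs_bounded_def by auto
  then show ?thesis using assms(1) unfolding bessel_like_def by blast
qed

lemma l2_dist_analysis_operator:
  assumes "module sc" and "module.subspace sc D" and "\<And>k. \<zeta> k \<in> lcs_dual sc D P"
    and "x \<in> D" and "y \<in> D"
  shows "l2_dist (\<lambda>k. cnj (\<zeta> k y)) (\<lambda>k. cnj (\<zeta> k x)) = analysis_norm \<zeta> (y - x)"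
  using lcs_dual_diff[OF assms(1,2,3) assms(5,4)]
  by (simp add: l2_dist_def analysis_norm_def flip: complex_cnj_diff)

lemma analysis_operator_continuous_if_bessel_like:
  assumes module: "module sc" and subspace: "module.subspace sc D"
    and reflexive: "lcs_reflexive sc D P"
    and dual: "\<And>k. \<zeta> k \<in> lcs_dual sc D P" and bessel: "bessel_like D P \<zeta>"
  shows "lcs_continuous_into D P l2_dist (\<lambda>\<eta> k. cnj (\<zeta> k \<eta>))"
proof (rule lcs_continuous_into_if_dominated)
  have summable: "summable (\<lambda>k. (cmod (\<zeta> k x))\<^sup>2)" for x
  proof (cases "x \<in> D")
    case False
    then have "\<zeta> k x = 0" for k using dual[of k] unfolding lcs_dual_def by blast
    then show ?thesis by simp
  qed (rule bessel_like_summable[OF bessel])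
  have D_diff: "a - b \<in> D" if "a \<in> D" "b \<in> D" for a b
    using module.subspace_diff[OF module subspace that] .
  have subadditive: "analysis_norm \<zeta> (a + b) \<le> analysis_norm \<zeta> a + analysis_norm \<zeta> b"
    if "a \<in> D" "b \<in> D" for a b
  proof -
    have "\<zeta> k (a + b) = \<zeta> k a + \<zeta> k b" for k
      using dual[of k] that unfolding lcs_dual_def conj_linear_on_def by blast
    then show ?thesis unfolding analysis_norm_def using l2_norm_triangle summable by simp
  qed
  fix x and e :: real assume "x \<in> D" and "0 < e"
  have "lcs_open D (bidual_seminorms sc D P) {y \<in> D. analysis_norm \<zeta> (y - x) < e}"
    using analysis_norm_bidual_seminorm[of \<zeta>, OF dual bessel summable] \<open>x \<in> D\<close>
    by (rule lcs_open_seminorm_ball) (auto intro: D_diff subadditive)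
  then show "lcs_open D P {y \<in> D. analysis_norm \<zeta> (y - x) < e}"
    using reflexive unfolding lcs_reflexive_def by blast
next
  show "analysis_norm \<zeta> 0 = 0"
    using l2_dist_analysis_operator[of sc D \<zeta>, OF module subspace dual, of 0 0]
      module.subspace_0[OF module subspace] by (simp add: l2_dist_def)
next
  show "l2_dist (\<lambda>k. cnj (\<zeta> k y)) (\<lambda>k. cnj (\<zeta> k x)) \<le> analysis_norm \<zeta> (y - x)"
    if "x \<in> D" "y \<in> D" for x y
    using l2_dist_analysis_operator[of sc D \<zeta>, OF module subspace dual that] by simp
qed

lemma bessel_like_if_analysis_operator_continuous:
  assumes module: "module sc" and subspace: "module.subspace sc D"
    and seminorms: "\<forall>p\<in>P. seminorm_on D sc p"
    and dual: "\<And>k. \<zeta> k \<in> lcs_dual sc D P"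
    and summable: "\<forall>\<eta>\<in>D. summable (\<lambda>k. (cmod (\<zeta> k \<eta>))\<^sup>2)"
    and continuous: "lcs_continuous_into D P l2_dist (\<lambda>\<eta> k. cnj (\<zeta> k \<eta>))"
  shows "bessel_like D P \<zeta>"
  unfolding bessel_like_def
proof (intro allI impI)
  have D0: "0 \<in> D" using module.subspace_0[OF module subspace] .
  obtain S \<delta> where S: "finite S" "S \<subseteq> P" "0 < \<delta>"
    "\<forall>y\<in>D. (\<forall>p\<in>S. p (y - 0) < \<delta>) \<longrightarrow> l2_dist (\<lambda>k. cnj (\<zeta> k y)) (\<lambda>k. cnj (\<zeta> k 0)) < 1"
    using continuous[unfolded lcs_continuous_into_def, rule_format, OF D0 zero_less_one]
    by (elim exE conjE) (rule that)
  have near_zero: "analysis_norm \<zeta> y < 1" if "y \<in> D" "\<forall>p\<in>S. p y < \<delta>" for y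
    using S(4) that l2_dist_analysis_operator[of sc D \<zeta>, OF module subspace dual D0 \<open>y \<in> D\<close>] by auto
  have scale_closed: "sc (of_real t) x \<in> D" if "x \<in> D" for x and t :: real
    using module.subspace_scale[OF module subspace that] .
  have homogeneous: "analysis_norm \<zeta> (sc (of_real t) x) = t * analysis_norm \<zeta> x"
    if "x \<in> D" "0 < t" for x t
  proof -
    have "\<zeta> k (sc (of_real t) x) = of_real t * \<zeta> k x" for k
      using dual[of k] that(1) unfolding lcs_dual_def conj_linear_on_def by simp
    then have "(\<Sum>k. (cmod (\<zeta> k (sc (of_real t) x)))\<^sup>2) = t\<^sup>2 * (\<Sum>k. (cmod (\<zeta> k x))\<^sup>2)"
      using summable that by (simp add: norm_mult power_mult_distrib suminf_mult)
    then show ?thesis using that(2) by (simp add: analysis_norm_def real_sqrt_mult)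
  qed
  fix M assume M: "lcs_bounded D P M"
  then have "bdd_above (analysis_norm \<zeta> ` M)"
    using seminorms S(1-3) near_zero scale_closed homogeneous
    by (intro bdd_above_if_homogeneous_and_bounded_near_zero[where X = D and sc = sc and S = S])
      (auto simp: lcs_bounded_def)
  then obtain b where b: "\<forall>\<eta>\<in>M. analysis_norm \<zeta> \<eta> \<le> b" unfolding bdd_above_def by auto
  then have "(\<Sum>k. (cmod (\<zeta> k \<eta>))\<^sup>2) \<le> b\<^sup>2" if "\<eta> \<in> M" for \<eta>
    using that unfolding analysis_norm_def by (blast intro: sqrt_le_D)
  then show "\<exists>B. \<forall>\<eta>\<in>M. summable (\<lambda>k. (cmod (\<zeta> k \<eta>))\<^sup>2) \<and> (\<Sum>k. (cmod (\<zeta> k \<eta>))\<^sup>2) \<le> B"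
    using summable M unfolding lcs_bounded_def by auto
qed

theorem proposition2p11:
  fixes sc :: "complex \<Rightarrow> 'a::ab_group_add \<Rightarrow> 'a"
    and ip :: "'a \<Rightarrow> 'a \<Rightarrow> complex"
    and D :: "'a set"
    and P :: "('a \<Rightarrow> real) set"
    and \<zeta> :: "nat \<Rightarrow> 'a \<Rightarrow> complex"
  assumes "rigged_hilbert_space sc ip D P"
    and "lcs_complete D P"
    and "lcs_reflexive sc D P"
    and "\<forall>k. \<zeta> k \<in> lcs_dual sc D P"
  shows "bessel_like D P \<zeta> \<longleftrightarrow>
         ((\<forall>\<eta>\<in>D. summable (\<lambda>k. (cmod (\<zeta> k \<eta>))\<^sup>2)) \<and>
          lcs_continuous_into D P l2_dist (\<lambda>\<eta> k. cnj (\<zeta> k \<eta>)))"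
proof -
  have "vector_space sc" and subspace: "module.subspace sc D"
    and seminorms: "\<forall>p\<in>P. seminorm_on D sc p"
    using assms(1) unfolding rigged_hilbert_space_def by auto
  then have module: "module sc" by (simp add: vector_space_def module_def)
  have dual: "\<And>k. \<zeta> k \<in> lcs_dual sc D P" using assms(4) by blast
  show ?thesis
  proof
    assume bessel: "bessel_like D P \<zeta>"
    show "(\<forall>\<eta>\<in>D. summable (\<lambda>k. (cmod (\<zeta> k \<eta>))\<^sup>2)) \<and>
        lcs_continuous_into D P l2_dist (\<lambda>\<eta> k. cnj (\<zeta> k \<eta>))"
      using bessel_like_summable[OF bessel]
        analysis_operator_continuous_if_bessel_like[where \<zeta> = \<zeta>, OF module subspace assms(3) dual bessel]
      by blast
  next
    assume "(\<forall>\<eta>\<in>D. summable (\<lambda>k. (cmod (\<zeta> k \<eta>))\<^sup>2)) \<and>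
        lcs_continuous_into D P l2_dist (\<lambda>\<eta> k. cnj (\<zeta> k \<eta>))"
    then show "bessel_like D P \<zeta>"
      using bessel_like_if_analysis_operator_continuous[where \<zeta> = \<zeta>, OF module subspace seminorms dual] by blast
  qed
qed

end
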